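(* Let $\mathcal D$ consist of $n$ i.i.d. triples $(x,a,y)$ with $x\sim d_0$, $a$ uniform on $\mathcal A$, $y$ the feedback, and let $\widehat V_{\mathcal D}(\pi,\psi)=\frac1n\sum_{\mathcal D}K\psi(y)\pi(a|x)$, $\widehat V_{\mathcal D}(\pi_u,\psi)=\frac1n\sum_{\mathcal D}\psi(y)$, and $(\hat\pi_{\mathcal D},\hat\psi_{\mathcal D})\in\arg\max_{(\pi,\psi)\in\Pi\times\Psi}\widehat V_{\mathcal D}(\pi,\psi)-\widehat V_{\mathcal D}(\pi_u,\psi)$. Assume Assumption 1 and that for some $\varepsilon_{\mathcal D}\ge0$ the uniform deviation bound $|(\widehat V_{\mathcal D}(\pi,\psi)-\widehat V_{\mathcal D}(\pi_u,\psi))-(V(\pi,\psi)-V(\pi_u,\psi))|\le K\varepsilon_{\mathcal D}$ holds for all $(\pi,\psi)\in\Pi\times\Psi$ (with $\varepsilon_{\mathcal D}=\sqrt{\iota/(2n)}$, $\iota\ge\log\frac{2|\Pi||\Psi|}{\delta}$, this holds with probability at least $1-\delta$). If $$\widehat V_{\mathcal D}(\hat\pi_{\mathcal D},\hat\psi_{\mathcal D})-\widehat V_{\mathcal D}(\pi_u,\hat\psi_{\mathcal D})>V(\pi_u)+K\varepsilon_{\mathcal D},$$ then $V(\hat\pi_{\mathcal D})\ge V(\pi^\star)-\frac{2K\varepsilon_{\mathcal D}}{\Delta\psi^\star}$.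
   Context: IGL setting: contexts $x\sim d_0$, finite action set $\mathcal A$ with $|\mathcal A|=K$, latent reward $r\in\{0,1\}$ and feedback $y\in\mathcal Y$ drawn given $(x,a)$; $R(x,a)=\mathbb E[r|x,a]$, $V(\pi)=\mathbb E_{x\sim d_0,a\sim\pi(\cdot|x)}[R(x,a)]$, $V(\pi,\psi)=\mathbb E_{x\sim d_0,a\sim\pi(\cdot|x)}[\psi(y)]$ for decoders $\psi:\mathcal Y\to[0,1]$. $\Pi$, $\Psi$ finite classes. Assumption 1: there are distributions $Q_0,Q_1$ on $\mathcal Y$ with $y\mid(x,a,r)\sim Q_r$; $\Delta\psi:=\mathbb E_{Q_1}[\psi]-\mathbb E_{Q_0}[\psi]$. $\pi_u$ uniform policy. $\pi^\star\in\arg\max_{\pi\in\Pi}V(\pi)$, $\psi^\star\in\arg\max_{\psi\in\Psi}\Delta\psi$, $\Delta\psi^\star=\Delta(\psi^\star)$. *)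

theory Defs
  imports "HOL-Probability.Probability"
begin

text \<open>Contexts of type 'x with law d0; finite action set A (K = card A);
  for each context x and action a, J x a is the joint law of the latent reward
  r (a bool: True = 1, False = 0) and the feedback y (in the measurable space Y).\<close>

definition Rfun :: "('x \<Rightarrow> 'a \<Rightarrow> (bool \<times> 'y) measure) \<Rightarrow> 'y measure \<Rightarrow> 'x \<Rightarrow> 'a \<Rightarrow> real" where
  "Rfun J Y x a = measure (J x a) ({True} \<times> space Y)"

definition igl_model ::
  "'x measure \<Rightarrow> 'a set \<Rightarrow> 'y measure \<Rightarrow> ('x \<Rightarrow> 'a \<Rightarrow> (bool \<times> 'y) measure) \<Rightarrow> bool" where
  "igl_model d0 A Y J \<longleftrightarrow>
     prob_space d0 \<and> finite A \<and> A \<noteq> {} \<and>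
     (\<forall>x\<in>space d0. \<forall>a\<in>A. prob_space (J x a) \<and>
         sets (J x a) = sets (count_space UNIV \<Otimes>\<^sub>M Y)) \<and>
     (\<forall>a\<in>A. (\<lambda>x. Rfun J Y x a) \<in> borel_measurable d0)"

text \<open>Assumption 1: y | (x,a,r) ~ Q_r.\<close>
definition assumption1 ::
  "'x measure \<Rightarrow> 'a set \<Rightarrow> 'y measure \<Rightarrow> ('x \<Rightarrow> 'a \<Rightarrow> (bool \<times> 'y) measure)
     \<Rightarrow> 'y measure \<Rightarrow> 'y measure \<Rightarrow> bool" where
  "assumption1 d0 A Y J Q0 Q1 \<longleftrightarrow>
     prob_space Q0 \<and> prob_space Q1 \<and> sets Q0 = sets Y \<and> sets Q1 = sets Y \<and>
     (\<forall>x\<in>space d0. \<forall>a\<in>A. \<forall>b. \<forall>B\<in>sets Y.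
        measure (J x a) ({b} \<times> B) =
          measure (J x a) ({b} \<times> space Y) * measure (if b then Q1 else Q0) B)"

definition policy :: "'x measure \<Rightarrow> 'a set \<Rightarrow> ('x \<Rightarrow> 'a \<Rightarrow> real) \<Rightarrow> bool" where
  "policy d0 A \<pi> \<longleftrightarrow> (\<forall>x. \<forall>a\<in>A. 0 \<le> \<pi> x a) \<and> (\<forall>x. (\<Sum>a\<in>A. \<pi> x a) = 1) \<and>
      (\<forall>a\<in>A. (\<lambda>x. \<pi> x a) \<in> borel_measurable d0)"

definition decoder :: "'y measure \<Rightarrow> ('y \<Rightarrow> real) \<Rightarrow> bool" where
  "decoder Y \<psi> \<longleftrightarrow> \<psi> \<in> borel_measurable Y \<and> (\<forall>y. 0 \<le> \<psi> y \<and> \<psi> y \<le> 1)"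

definition unif_policy :: "'a set \<Rightarrow> 'x \<Rightarrow> 'a \<Rightarrow> real" where
  "unif_policy A = (\<lambda>x a. 1 / real (card A))"

definition Vpol :: "'x measure \<Rightarrow> 'a set \<Rightarrow> 'y measure \<Rightarrow> ('x \<Rightarrow> 'a \<Rightarrow> (bool \<times> 'y) measure)
     \<Rightarrow> ('x \<Rightarrow> 'a \<Rightarrow> real) \<Rightarrow> real" where
  "Vpol d0 A Y J \<pi> = (\<integral>x. (\<Sum>a\<in>A. \<pi> x a * Rfun J Y x a) \<partial>d0)"

definition Vdec :: "'x measure \<Rightarrow> 'a set \<Rightarrow> ('x \<Rightarrow> 'a \<Rightarrow> (bool \<times> 'y) measure)
     \<Rightarrow> ('x \<Rightarrow> 'a \<Rightarrow> real) \<Rightarrow> ('y \<Rightarrow> real) \<Rightarrow> real" where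
  "Vdec d0 A J \<pi> \<psi> = (\<integral>x. (\<Sum>a\<in>A. \<pi> x a * (\<integral>p. \<psi> (snd p) \<partial>(J x a))) \<partial>d0)"

definition Delta :: "'y measure \<Rightarrow> 'y measure \<Rightarrow> ('y \<Rightarrow> real) \<Rightarrow> real" where
  "Delta Q0 Q1 \<psi> = (\<integral>y. \<psi> y \<partial>Q1) - (\<integral>y. \<psi> y \<partial>Q0)"

definition Vhat :: "'a set \<Rightarrow> ('x \<times> 'a \<times> 'y) list \<Rightarrow> ('x \<Rightarrow> 'a \<Rightarrow> real) \<Rightarrow> ('y \<Rightarrow> real) \<Rightarrow> real" where
  "Vhat A D \<pi> \<psi> =
     sum_list (map (\<lambda>(x, a, y). real (card A) * \<psi> y * \<pi> x a) D) / real (length D)"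

end

theory Submission
  imports Defs
begin

text \<open>Under Assumption 1 the feedback integral of a decoder is affine in the latent reward:
  V(\<pi>,\<psi>) = E_Q0 \<psi> + V(\<pi>) \<Delta>\<psi>, so V(\<pi>,\<psi>) - V(\<pi>_u,\<psi>) = (V(\<pi>) - V(\<pi>_u)) \<Delta>\<psi>.
  The hypothesis on the empirical maximiser forces (V(\<pi>hat) - V(\<pi>_u)) \<Delta>\<psi>hat > V(\<pi>_u) \<ge> 0,
  and since V \<ge> 0 and \<Delta> \<ge> -1 both factors must be positive. Comparing the maximiser with
  (\<pi>star, \<psi>star) through the uniform deviation bound and using \<Delta>\<psi>hat \<le> \<Delta>\<psi>star then gives
  (V(\<pi>star) - V(\<pi>hat)) \<Delta>\<psi>star \<le> 2 K \<epsilon>.\<close>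

lemma integral_snd_fibre:
  fixes M :: "(bool \<times> 'y) measure" and Y Q :: "'y measure" and \<psi> :: "'y \<Rightarrow> real"
  assumes M: "prob_space M" and sM: "sets M = sets (count_space UNIV \<Otimes>\<^sub>M Y)"
    and Q: "prob_space Q" and sQ: "sets Q = sets Y"
    and split: "\<forall>B\<in>sets Y. measure M ({b} \<times> B) = measure M ({b} \<times> space Y) * measure Q B"
    and psi: "\<psi> \<in> borel_measurable Y"
  shows "(\<integral>p. indicator ({b} \<times> space Y) p * \<psi> (snd p) \<partial>M)
       = measure M ({b} \<times> space Y) * (\<integral>y. \<psi> y \<partial>Q)"
proof -
  interpret M: prob_space M by fact
  interpret Q: prob_space Q by fact
  define S where "S = {b} \<times> space Y"
  define r where "r = measure M S"
  have S: "S \<in> sets M" unfolding S_def sM by (rule pair_measureI) auto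
  have sndm: "snd \<in> measurable M Y"
    using measurable_snd[of "count_space UNIV" Y] measurable_cong_sets[OF sM refl] by blast
  have spM: "space M = UNIV \<times> space Y"
    using sets_eq_imp_space_eq[OF sM] by (simp add: space_pair_measure)
  define N where "N = density M (\<lambda>p. ennreal (indicator S p))"
  have sndN: "snd \<in> measurable N Y"
    using sndm measurable_cong_sets[of N M Y Y] unfolding N_def by simp
  have distr_fibre: "distr N Y snd = density Q (\<lambda>_. ennreal r)"
  proof (rule measure_eqI)
    show "sets (distr N Y snd) = sets (density Q (\<lambda>_. ennreal r))" using sQ by simp
  next
    fix B assume "B \<in> sets (distr N Y snd)"
    hence B: "B \<in> sets Y" by simp
    have BM: "snd -` B \<inter> space M \<in> sets M" using sndm B by (simp add: measurable_sets)
    have "emeasure (distr N Y snd) B = emeasure N (snd -` B \<inter> space M)"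
      using emeasure_distr[OF sndN B] by (simp add: N_def)
    also have "\<dots> = (\<integral>\<^sup>+ p. ennreal (indicator S p) * indicator (snd -` B \<inter> space M) p \<partial>M)"
      unfolding N_def using BM S by (subst emeasure_density) auto
    also have "\<dots> = (\<integral>\<^sup>+ p. indicator ({b} \<times> B) p \<partial>M)"
      using sets.sets_into_space[OF B]
      by (intro nn_integral_cong) (auto simp: S_def spM indicator_def)
    also have "\<dots> = ennreal (measure M ({b} \<times> B))"
    proof -
      have "{b} \<times> B \<in> sets M" unfolding sM using B by (intro pair_measureI) auto
      thus ?thesis by (simp add: M.emeasure_eq_measure)
    qed
    also have "\<dots> = ennreal (r * measure Q B)"
      using split B unfolding r_def S_def by (intro arg_cong[where f = ennreal]) blast
    also have "\<dots> = ennreal r * emeasure Q B"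
      by (simp add: Q.emeasure_eq_measure ennreal_mult r_def)
    also have "\<dots> = emeasure (density Q (\<lambda>_. ennreal r)) B"
      using B sQ by (simp add: emeasure_density_const)
    finally show "emeasure (distr N Y snd) B = emeasure (density Q (\<lambda>_. ennreal r)) B" .
  qed
  have "(\<integral>p. indicator S p * \<psi> (snd p) \<partial>M) = (\<integral>p. \<psi> (snd p) \<partial>N)"
    unfolding N_def using integral_density[of "\<lambda>p. \<psi> (snd p)" M "indicator S"] S psi sndm
    by simp
  also have "\<dots> = (\<integral>y. \<psi> y \<partial>density Q (\<lambda>_. ennreal r))"
    using integral_distr[OF sndN psi] distr_fibre by simp
  also have "\<dots> = r * (\<integral>y. \<psi> y \<partial>Q)"
  proof -
    have "\<psi> \<in> borel_measurable Q" using psi measurable_cong_sets[OF sQ refl] by blast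
    thus ?thesis using integral_density[of \<psi> Q "\<lambda>_. r"] by (simp add: r_def)
  qed
  finally show ?thesis by (simp add: S_def r_def)
qed

lemma integral_snd_mixture:
  fixes M :: "(bool \<times> 'y) measure" and Y Q0 Q1 :: "'y measure" and \<psi> :: "'y \<Rightarrow> real"
  assumes M: "prob_space M" and sM: "sets M = sets (count_space UNIV \<Otimes>\<^sub>M Y)"
    and Q0: "prob_space Q0" and sQ0: "sets Q0 = sets Y"
    and Q1: "prob_space Q1" and sQ1: "sets Q1 = sets Y"
    and split: "\<forall>b. \<forall>B\<in>sets Y.
      measure M ({b} \<times> B) = measure M ({b} \<times> space Y) * measure (if b then Q1 else Q0) B"
    and psi: "\<psi> \<in> borel_measurable Y" and bnd: "\<forall>y. 0 \<le> \<psi> y \<and> \<psi> y \<le> 1"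
  shows "(\<integral>p. \<psi> (snd p) \<partial>M) = (\<integral>y. \<psi> y \<partial>Q0)
           + measure M ({True} \<times> space Y) * ((\<integral>y. \<psi> y \<partial>Q1) - (\<integral>y. \<psi> y \<partial>Q0))"
proof -
  interpret M: prob_space M by fact
  define T where "T = {True} \<times> space Y"
  define F where "F = {False} \<times> space Y"
  have T: "T \<in> sets M" unfolding T_def sM by (rule pair_measureI) auto
  have F: "F \<in> sets M" unfolding F_def sM by (rule pair_measureI) auto
  have spM: "space M = UNIV \<times> space Y"
    using sets_eq_imp_space_eq[OF sM] by (simp add: space_pair_measure)
  have sndm: "snd \<in> measurable M Y"
    using measurable_snd[of "count_space UNIV" Y] measurable_cong_sets[OF sM refl] by blast
  have pm: "(\<lambda>p. \<psi> (snd p)) \<in> borel_measurable M" using sndm psi by measurable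
  have integrable_on: "integrable M (\<lambda>p. indicator C p * \<psi> (snd p))" if "C \<in> sets M" for C
    by (rule M.integrable_const_bound[where B=1]) (use that pm bnd in \<open>auto simp: indicator_def\<close>)
  have "(\<integral>p. \<psi> (snd p) \<partial>M)
      = (\<integral>p. indicator T p * \<psi> (snd p) + indicator F p * \<psi> (snd p) \<partial>M)"
    by (intro Bochner_Integration.integral_cong) (auto simp: spM T_def F_def indicator_def)
  also have "\<dots> = measure M T * (\<integral>y. \<psi> y \<partial>Q1) + measure M F * (\<integral>y. \<psi> y \<partial>Q0)"
  proof -
    have "\<forall>B\<in>sets Y. measure M ({True} \<times> B) = measure M T * measure Q1 B"
      and "\<forall>B\<in>sets Y. measure M ({False} \<times> B) = measure M F * measure Q0 B"
      using spec[OF split, of True] spec[OF split, of False]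
      by (simp_all only: T_def F_def if_True if_False)
    from integral_snd_fibre[OF M sM Q1 sQ1 this(1)[unfolded T_def] psi]
      integral_snd_fibre[OF M sM Q0 sQ0 this(2)[unfolded F_def] psi]
    show ?thesis using integrable_on[OF T] integrable_on[OF F] by (simp add: T_def F_def)
  qed
  also have "measure M F = 1 - measure M T"
  proof -
    have "measure M (T \<union> F) = measure M T + measure M F"
      using T F by (intro measure_Union) (auto simp: T_def F_def M.emeasure_eq_measure)
    moreover have "T \<union> F = space M" by (auto simp: T_def F_def spM)
    ultimately show ?thesis using M.prob_space by simp
  qed
  finally show ?thesis by (simp add: T_def algebra_simps)
qed

lemma decoder_integral_bounds:
  assumes "prob_space Q" "sets Q = sets Y" "decoder Y \<psi>"
  shows "0 \<le> (\<integral>y. \<psi> y \<partial>Q)" and "(\<integral>y. \<psi> y \<partial>Q) \<le> 1"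
proof -
  interpret Q: prob_space Q by fact
  have m: "\<psi> \<in> borel_measurable Q"
    using assms(3) measurable_cong_sets[OF assms(2) refl] by (auto simp: decoder_def)
  have b: "\<forall>y. 0 \<le> \<psi> y \<and> \<psi> y \<le> 1" using assms(3) by (simp add: decoder_def)
  have "integrable Q \<psi>" by (rule Q.integrable_const_bound[where B=1]) (use m b in auto)
  hence "(\<integral>y. \<psi> y \<partial>Q) \<le> (\<integral>y. 1 \<partial>Q)" using b by (intro integral_mono) auto
  thus "(\<integral>y. \<psi> y \<partial>Q) \<le> 1" by (simp add: Q.prob_space)
  show "0 \<le> (\<integral>y. \<psi> y \<partial>Q)" using b by (intro integral_nonneg_AE) auto
qed

lemma Delta_ge_minus_one:
  assumes "assumption1 d0 A Y J Q0 Q1" "decoder Y \<psi>"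
  shows "-1 \<le> Delta Q0 Q1 \<psi>"
  using assms decoder_integral_bounds[of Q0 Y \<psi>] decoder_integral_bounds[of Q1 Y \<psi>]
  by (auto simp: assumption1_def Delta_def)

lemma policy_unif_policy: "finite A \<Longrightarrow> A \<noteq> {} \<Longrightarrow> policy d0 A (unif_policy A)"
  by (simp add: policy_def unif_policy_def)

lemma integral_decoder_affine_Rfun:
  assumes model: "igl_model d0 A Y J" and A1: "assumption1 d0 A Y J Q0 Q1"
    and dec: "decoder Y \<psi>" and x: "x \<in> space d0" and a: "a \<in> A"
  shows "(\<integral>p. \<psi> (snd p) \<partial>J x a) = (\<integral>y. \<psi> y \<partial>Q0) + Rfun J Y x a * Delta Q0 Q1 \<psi>"
  unfolding Rfun_def Delta_def
proof (rule integral_snd_mixture)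
  show "prob_space (J x a)" "sets (J x a) = sets (count_space UNIV \<Otimes>\<^sub>M Y)"
    using model x a unfolding igl_model_def by blast+
  show "prob_space Q0" "sets Q0 = sets Y" "prob_space Q1" "sets Q1 = sets Y"
    "\<forall>b. \<forall>B\<in>sets Y. measure (J x a) ({b} \<times> B)
       = measure (J x a) ({b} \<times> space Y) * measure (if b then Q1 else Q0) B"
    using A1 x a unfolding assumption1_def by blast+
  show "\<psi> \<in> borel_measurable Y" "\<forall>y. 0 \<le> \<psi> y \<and> \<psi> y \<le> 1"
    using dec unfolding decoder_def by blast+
qed

lemma expected_reward_bounds:
  assumes model: "igl_model d0 A Y J" and pol: "policy d0 A \<pi>" and x: "x \<in> space d0"
  shows "0 \<le> (\<Sum>a\<in>A. \<pi> x a * Rfun J Y x a)" and "(\<Sum>a\<in>A. \<pi> x a * Rfun J Y x a) \<le> 1"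
proof -
  have R: "0 \<le> Rfun J Y x a \<and> Rfun J Y x a \<le> 1" if "a \<in> A" for a
    using model x that prob_space.prob_le_1
    by (fastforce simp: igl_model_def Rfun_def)
  have p: "\<And>a. a \<in> A \<Longrightarrow> 0 \<le> \<pi> x a" "(\<Sum>a\<in>A. \<pi> x a) = 1"
    using pol by (auto simp: policy_def)
  show "0 \<le> (\<Sum>a\<in>A. \<pi> x a * Rfun J Y x a)" using p R by (intro sum_nonneg) auto
  have "(\<Sum>a\<in>A. \<pi> x a * Rfun J Y x a) \<le> (\<Sum>a\<in>A. \<pi> x a)"
    using p R by (intro sum_mono) (simp add: mult_left_le)
  thus "(\<Sum>a\<in>A. \<pi> x a * Rfun J Y x a) \<le> 1" using p by simp
qed

lemma Vpol_nonneg: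
  assumes "igl_model d0 A Y J" "policy d0 A \<pi>"
  shows "0 \<le> Vpol d0 A Y J \<pi>"
  unfolding Vpol_def using expected_reward_bounds(1)[OF assms]
  by (intro integral_nonneg_AE) auto

lemma Vdec_affine_Vpol:
  assumes model: "igl_model d0 A Y J" and A1: "assumption1 d0 A Y J Q0 Q1"
    and pol: "policy d0 A \<pi>" and dec: "decoder Y \<psi>"
  shows "Vdec d0 A J \<pi> \<psi> = (\<integral>y. \<psi> y \<partial>Q0) + Vpol d0 A Y J \<pi> * Delta Q0 Q1 \<psi>"
proof -
  interpret d0: prob_space d0 using model by (simp add: igl_model_def)
  define f where "f x = (\<Sum>a\<in>A. \<pi> x a * Rfun J Y x a)" for x
  have "f \<in> borel_measurable d0" unfolding f_def
    using model pol by (intro borel_measurable_sum borel_measurable_times)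
      (auto simp: igl_model_def policy_def)
  hence f_int: "integrable d0 f"
    using expected_reward_bounds[OF model pol]
    by (intro d0.integrable_const_bound[where B=1]) (auto simp: f_def)
  have "Vdec d0 A J \<pi> \<psi> = (\<integral>x. (\<integral>y. \<psi> y \<partial>Q0) + Delta Q0 Q1 \<psi> * f x \<partial>d0)"
    unfolding Vdec_def
  proof (intro Bochner_Integration.integral_cong refl)
    fix x assume x: "x \<in> space d0"
    have "(\<Sum>a\<in>A. \<pi> x a * (\<integral>p. \<psi> (snd p) \<partial>J x a))
        = (\<integral>y. \<psi> y \<partial>Q0) * (\<Sum>a\<in>A. \<pi> x a) + Delta Q0 Q1 \<psi> * f x"
      using integral_decoder_affine_Rfun[OF model A1 dec x]
      by (simp add: f_def algebra_simps sum.distrib sum_distrib_left)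
    thus "(\<Sum>a\<in>A. \<pi> x a * (\<integral>p. \<psi> (snd p) \<partial>J x a)) = (\<integral>y. \<psi> y \<partial>Q0) + Delta Q0 Q1 \<psi> * f x"
      using pol by (simp add: policy_def)
  qed
  also have "\<dots> = (\<integral>y. \<psi> y \<partial>Q0) + Delta Q0 Q1 \<psi> * (\<integral>x. f x \<partial>d0)"
    using f_int d0.prob_space by simp
  finally show ?thesis by (simp add: Vpol_def f_def[abs_def] mult.commute)
qed

lemma Vdec_excess_eq:
  assumes "igl_model d0 A Y J" "assumption1 d0 A Y J Q0 Q1"
    and "policy d0 A \<pi>" "policy d0 A \<pi>'" "decoder Y \<psi>"
  shows "Vdec d0 A J \<pi> \<psi> - Vdec d0 A J \<pi>' \<psi>
       = (Vpol d0 A Y J \<pi> - Vpol d0 A Y J \<pi>') * Delta Q0 Q1 \<psi>"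
  using Vdec_affine_Vpol[OF assms(1,2,3,5)] Vdec_affine_Vpol[OF assms(1,2,4,5)]
  by (simp add: algebra_simps)

text \<open>G and G' are the empirical excesses of the maximiser and of the comparator; by the
  decomposition above their population counterparts are (h - u) dh and (s - u) ds.\<close>

lemma excess_maximiser_bound:
  fixes G G' h s u dh ds e :: real
  assumes G': "G' \<le> G"
    and dev_hat: "\<bar>G - (h - u) * dh\<bar> \<le> e" and dev_star: "\<bar>G' - (s - u) * ds\<bar> \<le> e"
    and margin: "G > u + e"
    and h0: "0 \<le> h" and u0: "0 \<le> u" and dh1: "-1 \<le> dh" and dh_ds: "dh \<le> ds"
  shows "s - 2 * e / ds \<le> h"
proof -
  have prod: "u < (h - u) * dh" using dev_hat margin by linarith
  have hu: "0 < h - u"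
  proof (rule ccontr)
    assume "\<not> 0 < h - u"
    hence "(h - u) * dh \<le> u"
      using h0 u0 dh1 mult_left_mono[of "- dh" 1 "u - h"] mult_nonneg_nonpos[of "u - h" "- dh"]
      by (cases "0 \<le> dh") (auto simp: algebra_simps)
    thus False using prod by simp
  qed
  have "0 < dh" using prod u0 hu zero_less_mult_pos[of "h - u" dh] by linarith
  hence ds0: "0 < ds" using dh_ds by simp
  have "(s - u) * ds - 2 * e \<le> (h - u) * dh" using G' dev_hat dev_star by linarith
  also have "\<dots> \<le> (h - u) * ds" using hu dh_ds by (intro mult_left_mono) auto
  finally have "(s - h) * ds \<le> 2 * e" by (simp add: algebra_simps)
  hence "s - h \<le> 2 * e / ds" using ds0 by (simp add: pos_le_divide_eq)
  thus ?thesis by simp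
qed

theorem lemma2:
  fixes d0 :: "'x measure" and A :: "'a set" and Y :: "'y measure"
    and J :: "'x \<Rightarrow> 'a \<Rightarrow> (bool \<times> 'y) measure" and Q0 Q1 :: "'y measure"
    and PiC :: "('x \<Rightarrow> 'a \<Rightarrow> real) set" and PsiC :: "('y \<Rightarrow> real) set"
    and D :: "('x \<times> 'a \<times> 'y) list" and \<epsilon> :: real
    and \<pi>hat \<pi>star :: "'x \<Rightarrow> 'a \<Rightarrow> real" and \<psi>hat \<psi>star :: "'y \<Rightarrow> real"
  assumes model: "igl_model d0 A Y J"
    and A1: "assumption1 d0 A Y J Q0 Q1"
    and Pi_fin: "finite PiC" and Pi_pol: "\<forall>\<pi>\<in>PiC. policy d0 A \<pi>"
    and Psi_fin: "finite PsiC" and Psi_dec: "\<forall>\<psi>\<in>PsiC. decoder Y \<psi>"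
    and D_data: "set D \<subseteq> space d0 \<times> A \<times> space Y"
    and hat_mem: "\<pi>hat \<in> PiC" "\<psi>hat \<in> PsiC"
    and hat_max: "\<forall>\<pi>\<in>PiC. \<forall>\<psi>\<in>PsiC.
        Vhat A D \<pi> \<psi> - Vhat A D (unif_policy A) \<psi>
          \<le> Vhat A D \<pi>hat \<psi>hat - Vhat A D (unif_policy A) \<psi>hat"
    and star_pi: "\<pi>star \<in> PiC" "\<forall>\<pi>\<in>PiC. Vpol d0 A Y J \<pi> \<le> Vpol d0 A Y J \<pi>star"
    and star_psi: "\<psi>star \<in> PsiC" "\<forall>\<psi>\<in>PsiC. Delta Q0 Q1 \<psi> \<le> Delta Q0 Q1 \<psi>star"
    and eps_nonneg: "0 \<le> \<epsilon>"
    and deviation: "\<forall>\<pi>\<in>PiC. \<forall>\<psi>\<in>PsiC.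
        \<bar>(Vhat A D \<pi> \<psi> - Vhat A D (unif_policy A) \<psi>)
          - (Vdec d0 A J \<pi> \<psi> - Vdec d0 A J (unif_policy A) \<psi>)\<bar> \<le> real (card A) * \<epsilon>"
    and cond: "Vhat A D \<pi>hat \<psi>hat - Vhat A D (unif_policy A) \<psi>hat
        > Vpol d0 A Y J (unif_policy A) + real (card A) * \<epsilon>"
  shows "Vpol d0 A Y J \<pi>hat \<ge> Vpol d0 A Y J \<pi>star - 2 * real (card A) * \<epsilon> / Delta Q0 Q1 \<psi>star"
proof -
  have unif: "policy d0 A (unif_policy A)"
    using model policy_unif_policy by (auto simp: igl_model_def)
  have pols: "policy d0 A \<pi>hat" "policy d0 A \<pi>star"
    and decs: "decoder Y \<psi>hat" "decoder Y \<psi>star"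
    using Pi_pol Psi_dec hat_mem star_pi(1) star_psi(1) by auto
  have dev_hat: "\<bar>Vhat A D \<pi>hat \<psi>hat - Vhat A D (unif_policy A) \<psi>hat
      - (Vpol d0 A Y J \<pi>hat - Vpol d0 A Y J (unif_policy A)) * Delta Q0 Q1 \<psi>hat\<bar>
      \<le> real (card A) * \<epsilon>"
    unfolding Vdec_excess_eq[OF model A1 pols(1) unif decs(1), symmetric]
    using deviation hat_mem by blast
  have dev_star: "\<bar>Vhat A D \<pi>star \<psi>star - Vhat A D (unif_policy A) \<psi>star
      - (Vpol d0 A Y J \<pi>star - Vpol d0 A Y J (unif_policy A)) * Delta Q0 Q1 \<psi>star\<bar>
      \<le> real (card A) * \<epsilon>"
    unfolding Vdec_excess_eq[OF model A1 pols(2) unif decs(2), symmetric]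
    using deviation star_pi(1) star_psi(1) by blast
  have "Vhat A D \<pi>star \<psi>star - Vhat A D (unif_policy A) \<psi>star
      \<le> Vhat A D \<pi>hat \<psi>hat - Vhat A D (unif_policy A) \<psi>hat"
    using hat_max star_pi(1) star_psi(1) by blast
  moreover have "Delta Q0 Q1 \<psi>hat \<le> Delta Q0 Q1 \<psi>star"
    using star_psi(2) hat_mem(2) by blast
  ultimately have "Vpol d0 A Y J \<pi>star - 2 * (real (card A) * \<epsilon>) / Delta Q0 Q1 \<psi>star
      \<le> Vpol d0 A Y J \<pi>hat"
    using excess_maximiser_bound[OF _ dev_hat dev_star cond] Vpol_nonneg[OF model] pols unif
      Delta_ge_minus_one[OF A1 decs(1)] by blast
  thus ?thesis by (simp add: mult.assoc)
qed

end
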